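(* Let $(\mathcal{K},[\cdot,\cdot])$ be a Krein space with fundamental symmetry $J$ and let $\{k_n\}_{n\in\mathfrak{N}}$ ($\mathfrak{N}$ a countable index set) be a tight frame for the Krein space $\mathcal{K}$ with frame bounds $A=B=1$, i.e. $\sum_{n\in\mathfrak{N}}|[k_n,k]|^2=\|k\|_J^2$ for all $k\in\mathcal{K}$. Assume that $|[k_n,k_n]|=1$ for all $n\in\mathfrak{N}$. Then $\{k_n\}_{n\in\mathfrak{N}}$ is a $J$-orthonormal basis for $\mathcal{K}$.
   Context: A Krein space $(\mathcal{K},[\cdot,\cdot])$ has a fundamental decomposition $\mathcal{K}=\mathcal{K}_+\oplus\mathcal{K}_-$ and fundamental symmetry $J(k^++k^-)=k^+-k^-$, such that $[h,k]_J:=[h,Jk]$ is a positive definite inner product making $\mathcal{K}$ a Hilbert space; $\|k\|_J:=\sqrt{[k,k]_J}$. A $J$-orthonormal basis is a complete family $\{e_n\}_{n\in\mathfrak{N}}\subset\mathcal{K}$ (its closed linear span is $\mathcal{K}$) such that $[e_n,e_m]=0$ for $n\neq m$ and $|[e_n,e_n]|=1$ for all $n$. *)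

theory Defs
  imports "HOL-Analysis.Analysis"
begin

text \<open>The fundamental decomposition is K+ = {x. J x = x}, K- = {x. J x = -x}
  (every x = (x + J x)/2 + (x - J x)/2); K+ and K- are [.,.]-orthogonal,
  K+ is positive and K- is negative, and the space is complete (Hilbert) in the
  J-norm sqrt [x, J x].\<close>

definition J_norm :: "('a \<Rightarrow> 'a \<Rightarrow> complex) \<Rightarrow> ('a \<Rightarrow> 'a) \<Rightarrow> 'a \<Rightarrow> real" where
  "J_norm ip J x = sqrt (Re (ip x (J x)))"

definition krein_space ::
  "(complex \<Rightarrow> 'a::ab_group_add \<Rightarrow> 'a) \<Rightarrow> ('a \<Rightarrow> 'a \<Rightarrow> complex) \<Rightarrow> ('a \<Rightarrow> 'a) \<Rightarrow> bool" where
  "krein_space sc ip J \<longleftrightarrow>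
     module sc \<and>
     (\<forall>x y z. ip (x + y) z = ip x z + ip y z) \<and>
     (\<forall>c x y. ip (sc c x) y = c * ip x y) \<and>
     (\<forall>x y. ip x y = cnj (ip y x)) \<and>
     (\<forall>x y. J (x + y) = J x + J y) \<and>
     (\<forall>c x. J (sc c x) = sc c (J x)) \<and>
     (\<forall>x. J (J x) = x) \<and>
     (\<forall>x y. J x = x \<longrightarrow> J y = - y \<longrightarrow> ip x y = 0) \<and>
     (\<forall>x. J x = x \<longrightarrow> x \<noteq> 0 \<longrightarrow> Re (ip x x) > 0) \<and>
     (\<forall>x. J x = - x \<longrightarrow> x \<noteq> 0 \<longrightarrow> Re (ip x x) < 0) \<and>
     (\<forall>X::nat \<Rightarrow> 'a. (\<forall>e>0. \<exists>N. \<forall>m\<ge>N. \<forall>n\<ge>N. J_norm ip J (X m - X n) < e) \<longrightarrow>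
         (\<exists>L. (\<lambda>n. J_norm ip J (X n - L)) \<longlonglongrightarrow> 0))"

definition J_closure :: "('a::ab_group_add \<Rightarrow> 'a \<Rightarrow> complex) \<Rightarrow> ('a \<Rightarrow> 'a) \<Rightarrow> 'a set \<Rightarrow> 'a set" where
  "J_closure ip J S = {x. \<forall>e>0. \<exists>y\<in>S. J_norm ip J (x - y) < e}"

definition J_orthonormal_basis ::
  "(complex \<Rightarrow> 'a::ab_group_add \<Rightarrow> 'a) \<Rightarrow> ('a \<Rightarrow> 'a \<Rightarrow> complex) \<Rightarrow> ('a \<Rightarrow> 'a)
     \<Rightarrow> 'i set \<Rightarrow> ('i \<Rightarrow> 'a) \<Rightarrow> bool" where
  "J_orthonormal_basis sc ip J N e \<longleftrightarrow>
     J_closure ip J (module.span sc (e ` N)) = UNIV \<and>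
     (\<forall>n\<in>N. \<forall>m\<in>N. n \<noteq> m \<longrightarrow> ip (e n) (e m) = 0) \<and>
     (\<forall>n\<in>N. cmod (ip (e n) (e n)) = 1)"

end

theory Submission
  imports Defs
begin

text \<open>Every vector satisfies \<open>|[x,x]| \<le> \<parallel>x\<parallel>\<^sub>J\<^sup>2\<close>. Applying the Parseval identity to \<open>k\<^sub>m\<close> and to
  \<open>J k\<^sub>m\<close> squeezes \<open>\<parallel>k\<^sub>m\<parallel>\<^sub>J\<^sup>2\<close> between \<open>|[k\<^sub>m,k\<^sub>m]| = 1\<close> and \<open>1\<close>; then the term \<open>|[k\<^sub>m,k\<^sub>m]|\<^sup>2 = 1\<close>
  already exhausts the Parseval sum \<open>\<parallel>k\<^sub>m\<parallel>\<^sub>J\<^sup>2 = 1\<close>, so \<open>[k\<^sub>n,k\<^sub>m] = 0\<close> for \<open>n \<noteq> m\<close>.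
  For completeness, subtracting from \<open>x\<close> its \<open>[\<cdot>,\<cdot>]\<close>-orthogonal projection onto finitely many
  \<open>k\<^sub>n\<close>, \<open>n \<in> F\<close>, leaves a residual of squared J-norm \<open>\<parallel>x\<parallel>\<^sub>J\<^sup>2 - \<Sum>\<^sub>n\<^sub>\<in>\<^sub>F |[k\<^sub>n,x]|\<^sup>2\<close>, which is
  the tail of the Parseval sum and hence arbitrarily small.\<close>

lemma has_sum_term_le:
  fixes f :: "'i \<Rightarrow> real"
  assumes "(f has_sum S) N" "m \<in> N" "\<And>n. n \<in> N \<Longrightarrow> 0 \<le> f n"
  shows "f m \<le> S"
  using has_sum_mono2[OF has_sum_finite[of "{m}" f] assms(1)] assms(2,3) by simp

locale krein =
  fixes sc :: "complex \<Rightarrow> 'a::ab_group_add \<Rightarrow> 'a"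
    and ip :: "'a \<Rightarrow> 'a \<Rightarrow> complex"
    and J :: "'a \<Rightarrow> 'a"
  assumes krein_space: "krein_space sc ip J"
begin

lemma module: "module sc"
  and ip_add_left: "ip (x + y) z = ip x z + ip y z"
  and ip_scale_left: "ip (sc c x) y = c * ip x y"
  and ip_cnj_commute: "ip x y = cnj (ip y x)"
  and J_add: "J (x + y) = J x + J y"
  and J_J: "J (J x) = x"
  and ip_pos_neg_eq_0: "J p = p \<Longrightarrow> J q = - q \<Longrightarrow> ip p q = 0"
  and ip_pos_gt_0: "J p = p \<Longrightarrow> p \<noteq> 0 \<Longrightarrow> Re (ip p p) > 0"
  and ip_neg_lt_0: "J q = - q \<Longrightarrow> q \<noteq> 0 \<Longrightarrow> Re (ip q q) < 0"
  using krein_space[unfolded krein_space_def] by meson+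

lemma ip_add_right: "ip x (y + z) = ip x y + ip x z"
proof -
  have "ip x (y + z) = cnj (ip y x) + cnj (ip z x)"
    by (subst ip_cnj_commute) (simp add: ip_add_left)
  then show ?thesis using ip_cnj_commute[of x y] ip_cnj_commute[of x z] by simp
qed

lemma ip_zero_left: "ip 0 z = 0"
  using ip_add_left[of 0 0 z] by simp

lemma ip_minus_left: "ip (- x) z = - ip x z"
  using ip_add_left[of x "- x" z] by (simp add: ip_zero_left eq_neg_iff_add_eq_0 add.commute)

lemma ip_diff_left: "ip (x - y) z = ip x z - ip y z"
  by (simp only: diff_conv_add_uminus ip_add_left ip_minus_left)

lemma ip_diff_right: "ip z (x - y) = ip z x - ip z y"
proof -
  have "ip z (x - y) = cnj (ip x z) - cnj (ip y z)"
    by (subst ip_cnj_commute) (simp add: ip_diff_left)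
  then show ?thesis using ip_cnj_commute[of z x] ip_cnj_commute[of z y] by simp
qed

lemma ip_sum_left: "ip (sum f F) z = (\<Sum>i\<in>F. ip (f i) z)"
  by (induct F rule: infinite_finite_induct) (simp_all add: ip_zero_left ip_add_left)

lemma cmod_ip_commute: "cmod (ip x y) = cmod (ip y x)"
  by (subst ip_cnj_commute) simp

lemma J_diff: "J (x - y) = J x - J y"
proof -
  have "J 0 = 0" using J_add[of 0 0] by simp
  then have "J (- y) = - J y" using J_add[of y "- y"] by (simp add: eq_neg_iff_add_eq_0 add.commute)
  then show ?thesis by (simp only: diff_conv_add_uminus J_add)
qed

lemma ip_self_real: "Im (ip x x) = 0"
  using arg_cong[OF ip_cnj_commute[of x x], of Im] by simp

lemma cmod_ip_pos: "J p = p \<Longrightarrow> cmod (ip p p) = Re (ip p p)"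
  using ip_pos_gt_0[of p] ip_self_real[of p] by (cases "p = 0") (auto simp: cmod_def ip_zero_left)

lemma cmod_ip_neg: "J q = - q \<Longrightarrow> cmod (ip q q) = - Re (ip q q)"
  using ip_neg_lt_0[of q] ip_self_real[of q] by (cases "q = 0") (auto simp: cmod_def ip_zero_left)

text \<open>Writing \<open>2x = p + q\<close> and \<open>2 J x = p - q\<close> with \<open>p = x + J x \<in> K\<^sub>+\<close>, \<open>q = x - J x \<in> K\<^sub>-\<close>,
  one gets \<open>4[x,x] = [p,p] + [q,q]\<close> and \<open>4[x,Jx] = [p,p] - [q,q] = |[p,p]| + |[q,q]|\<close>.\<close>
lemma cmod_ip_le_ip_J: "cmod (ip x x) \<le> Re (ip x (J x))"
proof -
  define p where "p = x + J x"
  define q where "q = x - J x"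
  have Jp: "J p = p" unfolding p_def by (simp add: J_add J_J add.commute)
  have Jq: "J q = - q" unfolding q_def by (simp add: J_diff J_J)
  have pq: "ip p q = 0" and qp: "ip q p = 0"
    using ip_pos_neg_eq_0[OF Jp Jq] ip_cnj_commute[of q p] by simp_all
  have sum: "x + x = p + q" and diff: "J x + J x = p - q"
    unfolding p_def q_def by simp_all
  have "4 * ip x x = ip (x + x) (x + x)"
    by (simp add: ip_add_left ip_add_right)
  also have "\<dots> = ip p p + ip q q"
    unfolding sum by (simp add: ip_add_left ip_add_right pq qp)
  finally have sq: "4 * ip x x = ip p p + ip q q" .
  have "4 * ip x (J x) = ip (x + x) (J x + J x)"
    by (simp add: ip_add_left ip_add_right)
  also have "\<dots> = ip p p - ip q q"
    unfolding sum diff by (simp add: ip_add_left ip_diff_right pq qp)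
  finally have sqJ: "4 * ip x (J x) = ip p p - ip q q" .
  have "cmod (4 * ip x x) \<le> cmod (ip p p) + cmod (ip q q)"
    unfolding sq by (rule norm_triangle_ineq)
  also have "\<dots> = Re (4 * ip x (J x))"
    using sqJ cmod_ip_pos[OF Jp] cmod_ip_neg[OF Jq] by simp
  finally show ?thesis by (simp add: norm_mult)
qed

lemma ip_J_nonneg: "0 \<le> Re (ip x (J x))"
  using norm_ge_zero cmod_ip_le_ip_J order_trans by blast

lemma J_norm_sq: "(J_norm ip J x)\<^sup>2 = Re (ip x (J x))"
  unfolding J_norm_def using ip_J_nonneg by simp

lemma J_norm_J: "J_norm ip J (J x) = J_norm ip J x"
  using ip_cnj_commute[of "J x" x] unfolding J_norm_def by (simp add: J_J)

end

locale krein_parseval_frame = krein +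
  fixes N :: "'i set"
    and k :: "'i \<Rightarrow> 'a::ab_group_add"
  assumes parseval: "((\<lambda>n. (cmod (ip (k n) x))\<^sup>2) has_sum (J_norm ip J x)\<^sup>2) N"
begin

lemma frame_coeff_sq_le: "m \<in> N \<Longrightarrow> (cmod (ip (k m) x))\<^sup>2 \<le> (J_norm ip J x)\<^sup>2"
  by (rule has_sum_term_le[OF parseval]) simp_all

text \<open>\<open>\<parallel>k\<^sub>m\<parallel>\<^sub>J\<^sup>4 = [k\<^sub>m, J k\<^sub>m]\<^sup>2 \<le> \<parallel>J k\<^sub>m\<parallel>\<^sub>J\<^sup>2 = \<parallel>k\<^sub>m\<parallel>\<^sub>J\<^sup>2\<close>.\<close>
lemma J_norm_frame_vector_le_1:
  assumes "m \<in> N"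
  shows "J_norm ip J (k m) \<le> 1"
proof -
  define t where "t = J_norm ip J (k m)"
  have "(t\<^sup>2)\<^sup>2 \<le> (cmod (ip (k m) (J (k m))))\<^sup>2"
    unfolding t_def J_norm_sq by (intro power_mono complex_Re_le_cmod ip_J_nonneg)
  also have "\<dots> \<le> t\<^sup>2"
    using frame_coeff_sq_le[OF assms, of "J (k m)"] unfolding t_def J_norm_J .
  finally have "t\<^sup>2 * t\<^sup>2 \<le> t\<^sup>2 * 1" by (simp add: power2_eq_square)
  then have "t\<^sup>2 \<le> 1"
    using mult_left_le_imp_le[of "t\<^sup>2" "t\<^sup>2" 1] by (cases "t = 0") auto
  moreover have "t \<ge> 0" unfolding t_def J_norm_def by (simp add: ip_J_nonneg)
  ultimately show ?thesis unfolding t_def[symmetric] by (simp add: power_le_one_iff)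
qed

lemma J_norm_frame_vector_eq_1:
  assumes "m \<in> N" "cmod (ip (k m) (k m)) = 1"
  shows "J_norm ip J (k m) = 1"
proof -
  have "1 \<le> Re (ip (k m) (J (k m)))"
    using cmod_ip_le_ip_J[of "k m"] assms(2) by simp
  then have "1 \<le> J_norm ip J (k m)"
    unfolding J_norm_def by simp
  with J_norm_frame_vector_le_1[OF assms(1)] show ?thesis by simp
qed

lemma frame_vectors_orthogonal:
  assumes "n \<in> N" "m \<in> N" "n \<noteq> m" "cmod (ip (k m) (k m)) = 1"
  shows "ip (k n) (k m) = 0"
proof -
  have "((\<lambda>n. (cmod (ip (k n) (k m)))\<^sup>2) has_sum 0) (N - {m})"
    using has_sum_Diff[OF parseval[of "k m"] has_sum_finite[of "{m}"]] assms(2,4)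
    by (simp add: J_norm_frame_vector_eq_1)
  then have "(cmod (ip (k n) (k m)))\<^sup>2 \<le> 0"
    by (rule has_sum_term_le) (use assms(1,3) in auto)
  then show ?thesis by simp
qed

definition frame_proj :: "'i set \<Rightarrow> 'a \<Rightarrow> 'a" where
  "frame_proj F x = (\<Sum>n\<in>F. sc (ip x (k n) / ip (k n) (k n)) (k n))"

lemma frame_proj_in_span: "F \<subseteq> N \<Longrightarrow> frame_proj F x \<in> module.span sc (k ` N)"
  unfolding frame_proj_def
  by (intro module.span_sum[OF module] module.span_scale[OF module] module.span_base[OF module]) auto

lemma ip_frame_residual:
  assumes orth: "pairwise (\<lambda>n m. ip (k n) (k m) = 0) N"
    and "finite F" "F \<subseteq> N" "m \<in> N" "ip (k m) (k m) \<noteq> 0"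
  shows "ip (x - frame_proj F x) (k m) = (if m \<in> F then 0 else ip x (k m))"
proof -
  define c where "c n = ip x (k n) / ip (k n) (k n)" for n
  have rest: "(\<Sum>n\<in>F - {m}. c n * ip (k n) (k m)) = 0"
    using orth assms(3,4) by (intro sum.neutral) (auto simp: pairwise_def)
  have "ip (frame_proj F x) (k m) = (\<Sum>n\<in>F. c n * ip (k n) (k m))"
    unfolding frame_proj_def c_def by (simp add: ip_sum_left ip_scale_left)
  also have "\<dots> = (if m \<in> F then ip x (k m) else 0)"
  proof (cases "m \<in> F")
    case True
    then show ?thesis
      using rest assms(5) by (simp add: sum.remove[OF assms(2) True] c_def)
  next
    case False
    then show ?thesis using rest by simp
  qed
  finally show ?thesis by (simp add: ip_diff_left)
qed

lemma J_norm_sq_frame_residual: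
  assumes orth: "pairwise (\<lambda>n m. ip (k n) (k m) = 0) N"
    and nonneutral: "\<And>n. n \<in> N \<Longrightarrow> ip (k n) (k n) \<noteq> 0"
    and F: "finite F" "F \<subseteq> N"
  shows "(J_norm ip J (x - frame_proj F x))\<^sup>2 = (J_norm ip J x)\<^sup>2 - (\<Sum>n\<in>F. (cmod (ip (k n) x))\<^sup>2)"
proof -
  define y where "y = x - frame_proj F x"
  have coeff: "cmod (ip (k n) y) = (if n \<in> F then 0 else cmod (ip (k n) x))" if "n \<in> N" for n
    using ip_frame_residual[OF orth F that nonneutral[OF that], of x] cmod_ip_commute
    unfolding y_def by (metis norm_zero)
  have "(\<Sum>n\<in>F. (cmod (ip (k n) y))\<^sup>2) = 0"
    by (intro sum.neutral) (auto simp: coeff subsetD[OF F(2)])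
  then have "((\<lambda>n. (cmod (ip (k n) y))\<^sup>2) has_sum (J_norm ip J y)\<^sup>2) (N - F)"
    using has_sum_Diff[OF parseval[of y] has_sum_finite[OF F(1)] F(2)] by simp
  then have "((\<lambda>n. (cmod (ip (k n) x))\<^sup>2) has_sum (J_norm ip J y)\<^sup>2) (N - F)"
    by (rule has_sum_cong[THEN iffD1, rotated]) (simp add: coeff)
  moreover have "((\<lambda>n. (cmod (ip (k n) x))\<^sup>2) has_sum
      (J_norm ip J x)\<^sup>2 - (\<Sum>n\<in>F. (cmod (ip (k n) x))\<^sup>2)) (N - F)"
    by (rule has_sum_Diff[OF parseval[of x] has_sum_finite[OF F(1)] F(2)])
  ultimately show ?thesis unfolding y_def by (rule has_sum_unique)
qed

lemma J_closure_span_frame: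
  assumes orth: "pairwise (\<lambda>n m. ip (k n) (k m) = 0) N"
    and nonneutral: "\<And>n. n \<in> N \<Longrightarrow> ip (k n) (k n) \<noteq> 0"
  shows "J_closure ip J (module.span sc (k ` N)) = UNIV"
proof -
  have "\<exists>y\<in>module.span sc (k ` N). J_norm ip J (x - y) < e" if "e > 0" for x e
  proof -
    let ?f = "\<lambda>n. (cmod (ip (k n) x))\<^sup>2"
    have "\<forall>\<^sub>F F in finite_subsets_at_top N. dist (sum ?f F) ((J_norm ip J x)\<^sup>2) < e\<^sup>2"
      using parseval[of x] \<open>e > 0\<close> unfolding has_sum_def tendsto_iff by simp
    then obtain F where F: "finite F" "F \<subseteq> N" and close: "dist (sum ?f F) ((J_norm ip J x)\<^sup>2) < e\<^sup>2"
      unfolding eventually_finite_subsets_at_top by blast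
    have "(J_norm ip J (x - frame_proj F x))\<^sup>2 < e\<^sup>2"
      using close J_norm_sq_frame_residual[OF orth nonneutral F, of x] by (simp add: dist_real_def)
    then have "J_norm ip J (x - frame_proj F x) < e"
      using \<open>e > 0\<close> by (simp add: power_less_imp_less_base less_imp_le)
    with frame_proj_in_span[OF F(2)] show ?thesis by blast
  qed
  then show ?thesis unfolding J_closure_def by blast
qed

end

theorem proposition3p9:
  fixes sc :: "complex \<Rightarrow> 'a::ab_group_add \<Rightarrow> 'a"
    and ip :: "'a \<Rightarrow> 'a \<Rightarrow> complex"
    and J :: "'a \<Rightarrow> 'a"
    and N :: "'i set"
    and k :: "'i \<Rightarrow> 'a"
  assumes "krein_space sc ip J"
    and "countable N"
    and "\<And>x. ((\<lambda>n. (cmod (ip (k n) x))\<^sup>2) has_sum (J_norm ip J x)\<^sup>2) N"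
    and "\<And>n. n \<in> N \<Longrightarrow> cmod (ip (k n) (k n)) = 1"
  shows "J_orthonormal_basis sc ip J N k"
proof -
  interpret krein_parseval_frame sc ip J N k
    by unfold_locales (use assms(1,3) in auto)
  have orth: "pairwise (\<lambda>n m. ip (k n) (k m) = 0) N"
    using frame_vectors_orthogonal assms(4) by (auto simp: pairwise_def)
  have "ip (k n) (k n) \<noteq> 0" if "n \<in> N" for n
    using assms(4)[OF that] by auto
  with orth have "J_closure ip J (module.span sc (k ` N)) = UNIV"
    by (rule J_closure_span_frame)
  with orth assms(4) show ?thesis
    unfolding J_orthonormal_basis_def pairwise_def by blast
qed

end
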